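(* For all $v,w\in\mathfrak{H}^0$, $Z_q^t(v\stackrel{t}{\ast}_\hbar w)=Z_q^t(v)\,Z_q^t(w)$.
   Context: Let $q$, $t$ be formal parameters and $[n]=\frac{1-q^n}{1-q}$. For positive integers $k_1,\dots,k_l$ with $k_1\ge 2$ put $\zeta_q(k_1,\dots,k_l)=\sum_{m_1>\cdots>m_l\ge1}\prod_{a=1}^l \frac{q^{(k_a-1)m_a}}{[m_a]^{k_a}}$. Define $\zeta_q^t(k_1,\dots,k_l)=\sum'_{\mathbf p}(1-q)^{k-\mathrm{wt}(\mathbf p)}\zeta_q(\mathbf p)\,t^{l-\mathrm{dep}(\mathbf p)}$, where $k=k_1+\cdots+k_l$, wt and dep denote the sum and the number of entries of an index, and $\mathbf p$ runs over all indices $(k_1\ \square\ k_2\ \square\cdots\square\ k_l)$ with each $\square$ filled by "," , "$+$" or "$-1+$". Let $\hbar$ be a formal variable, $\mathfrak{H}=\mathbb{Q}[\hbar,t]\langle x,y\rangle$, $\mathfrak{H}^1=\mathbb{Q}[\hbar,t]+\mathfrak{H}y$, $\mathfrak{H}^0=\mathbb{Q}[\hbar,t]+x\mathfrak{H}y$, $z_j=x^{j-1}y$. Let $Z_q^t:\mathfrak{H}^0\to\mathbb{Q}[t][[q]]$ be the composition of the $\mathbb{Q}[\hbar,t]$-linear map $\widehat Z_q^t$ with $\widehat Z_q^t(1)=1$, $\widehat Z_q^t(z_{k_1}\cdots z_{k_l})=\zeta_q^t(k_1,\dots,k_l)$ ($k_1\ge2$), followed by the substitution $\hbar\mapsto1-q$.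 Let $z_i\circ_+ z_j=z_{i+j}+\hbar z_{i+j-1}$ on the $\mathbb{Q}[\hbar,t]$-span $\mathfrak z$ of the $z_j$, extended to an action on $\mathfrak{H}^1$ by $z_i\circ_+1=0$, $z_i\circ_+(z_jw)=(z_i\circ_+z_j)w$. The product $\stackrel{t}{\ast}_\hbar$ on $\mathfrak{H}^1$ is the $\mathbb{Q}[\hbar,t]$-bilinear product with $1\stackrel{t}{\ast}_\hbar w=w\stackrel{t}{\ast}_\hbar1=w$ and $z_iu\stackrel{t}{\ast}_\hbar z_jv=z_i(u\stackrel{t}{\ast}_\hbar z_jv)+z_j(z_iu\stackrel{t}{\ast}_\hbar v)+(1-2t)(z_i\circ_+z_j)(u\stackrel{t}{\ast}_\hbar v)+(t^2-t)\,z_i\circ_+z_j\circ_+(u\stackrel{t}{\ast}_\hbar v)$ for $i,j\ge1$ and words $u,v,w$ ($(z_i\circ_+z_j)X$ denotes concatenation; $z_i\circ_+z_j\circ_+X=(z_i\circ_+z_j)\circ_+X$). *)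

theory Defs
  imports "HOL-Analysis.Analysis" "HOL-Computational_Algebra.Computational_Algebra"
    "HOL-Library.Poly_Mapping"
begin

type_synonym coeff = "rat poly poly"  \<comment> \<open>outer variable hbar, inner variable t\<close>

definition hbar :: coeff where "hbar = [:0, 1:]"
definition tvar :: coeff where "tvar = [:[:0, 1:]:]"

text \<open>Substitution hbar := 1 - q, from Q[hbar,t] into Q[t][[q]] (= rat poly fps).\<close>
definition subst_hbar :: "coeff \<Rightarrow> rat poly fps" where
  "subst_hbar c = poly (map_poly fps_const c) (1 - fps_X)"

definition embed_fps :: "rat fps \<Rightarrow> rat poly fps" where
  "embed_fps f = Abs_fps (\<lambda>n. [: fps_nth f n :])"

definition qint :: "nat \<Rightarrow> rat fps" where
  "qint n = (1 - fps_X ^ n) / (1 - fps_X)"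

text \<open>Index sets of the summation: strictly decreasing sequences of positive integers
  of length l; the sum is the (unconditional) infinite sum in the q-adic topology of fps.\<close>
definition zeta_q :: "nat list \<Rightarrow> rat fps" where
  "zeta_q ks = infsum (\<lambda>ms. \<Prod>a<length ks.
       fps_X ^ ((ks ! a - 1) * (ms ! a)) * inverse (qint (ms ! a)) ^ (ks ! a))
     {ms :: nat list. length ms = length ks \<and> sorted_wrt (>) ms \<and> (\<forall>m\<in>set ms. 1 \<le> m)}"

datatype box = Comma | Plus | MinusPlus

fun fill :: "nat list \<Rightarrow> box list \<Rightarrow> nat list" where
  "fill [k] [] = [k]"
| "fill (k1 # k2 # ks) (Comma # bs) = k1 # fill (k2 # ks) bs"
| "fill (k1 # k2 # ks) (Plus # bs) = fill ((k1 + k2) # ks) bs"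
| "fill (k1 # k2 # ks) (MinusPlus # bs) = fill ((k1 + k2 - 1) # ks) bs"
| "fill _ _ = []"

definition fillings :: "nat \<Rightarrow> box list set" where
  "fillings n = set (List.n_lists n [Comma, Plus, MinusPlus])"

definition zeta_qt :: "nat list \<Rightarrow> rat poly fps" where
  "zeta_qt ks = (\<Sum>bs\<in>fillings (length ks - 1).
      let p = fill ks bs in
        (1 - fps_X) ^ (sum_list ks - sum_list p) * embed_fps (zeta_q p)
        * fps_const ([:0, 1:] ^ (length ks - length p)))"

text \<open>A word z_{k1}...z_{kl} (= x^{k1-1} y ... x^{kl-1} y) is encoded as [k1,...,kl];
  the empty word is 1.\<close>
type_synonym hmod = "nat list \<Rightarrow>\<^sub>0 coeff"

definition H1 :: "hmod set" where
  "H1 = {v. \<forall>ks\<in>Poly_Mapping.keys v. \<forall>k\<in>set ks. 1 \<le> k}"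

definition H0 :: "hmod set" where
  "H0 = {v. \<forall>ks\<in>Poly_Mapping.keys v. (\<forall>k\<in>set ks. 1 \<le> k) \<and> (ks \<noteq> [] \<longrightarrow> 2 \<le> hd ks)}"

definition scal :: "coeff \<Rightarrow> hmod \<Rightarrow> hmod" where
  "scal c v = Poly_Mapping.map (\<lambda>a. c * a) v"

definition lin :: "(nat list \<Rightarrow> hmod) \<Rightarrow> hmod \<Rightarrow> hmod" where
  "lin f v = (\<Sum>u\<in>Poly_Mapping.keys v. scal (Poly_Mapping.lookup v u) (f u))"

definition word :: "nat list \<Rightarrow> hmod" where
  "word u = Poly_Mapping.single u 1"

definition zcons :: "nat \<Rightarrow> hmod \<Rightarrow> hmod" where
  "zcons i = lin (\<lambda>u. word (i # u))"

fun circ_word :: "nat \<Rightarrow> nat list \<Rightarrow> hmod" where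
  "circ_word i [] = 0"
| "circ_word i (j # u) = word ((i + j) # u) + scal hbar (word ((i + j - 1) # u))"

definition circ :: "nat \<Rightarrow> hmod \<Rightarrow> hmod" where
  "circ i = lin (circ_word i)"

fun tprod_word :: "nat list \<Rightarrow> nat list \<Rightarrow> hmod" where
  "tprod_word [] v = word v"
| "tprod_word u [] = word u"
| "tprod_word (i # u) (j # v) =
     zcons i (tprod_word u (j # v)) + zcons j (tprod_word (i # u) v)
     + scal (1 - 2 * tvar) (zcons (i + j) (tprod_word u v) + scal hbar (zcons (i + j - 1) (tprod_word u v)))
     + scal (tvar ^ 2 - tvar) (circ (i + j) (tprod_word u v) + scal hbar (circ (i + j - 1) (tprod_word u v)))"

definition tprod :: "hmod \<Rightarrow> hmod \<Rightarrow> hmod" where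
  "tprod v w = (\<Sum>u\<in>Poly_Mapping.keys v. \<Sum>u'\<in>Poly_Mapping.keys w. scal (Poly_Mapping.lookup v u * Poly_Mapping.lookup w u') (tprod_word u u'))"

definition Zhat_word :: "nat list \<Rightarrow> rat poly fps" where
  "Zhat_word u = (if u = [] then 1 else zeta_qt u)"

definition Zqt :: "hmod \<Rightarrow> rat poly fps" where
  "Zqt v = (\<Sum>u\<in>Poly_Mapping.keys v. subst_hbar (Poly_Mapping.lookup v u) * Zhat_word u)"

end

theory Submission
  imports Defs
begin

text \<open>
  Put f_k(j) = q^((k-1)j) / [j]^k, so that \<zeta>_q(k_1,...,k_l) is the sum of
  f_{k_1}(m_1) ... f_{k_l}(m_l) over m_1 > ... > m_l \<ge> 1. These factors satisfy
  f_a(j) f_b(j) = f_{a+b}(j) + (1 - q) f_{a+b-1}(j), which is z_a \<circ>_+ z_b at \<hbar> = 1 - q.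
  By this identity the fillings defining \<zeta>_q^t add up to the sum over m_1 \<ge> ... \<ge> m_l \<ge> 1
  weighted by t to the number of equalities m_a = m_{a+1}. Restricting this sum to m_1 < m
  gives a linear map Z_m, and splitting according to whether the largest summation variable
  comes from v, from w or from both shows Z_m(v * w) = Z_m(v) Z_m(w), by induction on m and
  on the words. For admissible words the neglected terms are divisible by q^m, since
  k_1 \<ge> 2; so Z_m agrees with Z_q^t modulo q^m, and letting m tend to infinity proves the theorem.
\<close>

lemma fps_const_sum: "fps_const (\<Sum>i\<in>A. f i) = (\<Sum>i\<in>A. fps_const (f i))"
  by (induction A rule: infinite_finite_induct) (auto simp flip: fps_const_add)

lemma map_poly_fps_const_add:
  "map_poly fps_const (p + q) = map_poly fps_const p + map_poly (fps_const :: 'a::comm_ring_1 \<Rightarrow> _) q"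
  by (rule poly_eqI) (simp add: coeff_map_poly)

lemma map_poly_fps_const_mult:
  "map_poly fps_const (p * q) = map_poly fps_const p * map_poly (fps_const :: 'a::comm_ring_1 \<Rightarrow> _) q"
  by (rule poly_eqI) (simp add: coeff_map_poly coeff_mult fps_const_sum)

lemma subst_hbar_add [simp]: "subst_hbar (a + b) = subst_hbar a + subst_hbar b"
  by (simp add: subst_hbar_def map_poly_fps_const_add)

lemma subst_hbar_mult [simp]: "subst_hbar (a * b) = subst_hbar a * subst_hbar b"
  by (simp add: subst_hbar_def map_poly_fps_const_mult)

lemma subst_hbar_0 [simp]: "subst_hbar 0 = 0"
  by (simp add: subst_hbar_def)

lemma subst_hbar_1 [simp]: "subst_hbar 1 = 1"
  by (simp add: subst_hbar_def)

lemma subst_hbar_uminus [simp]: "subst_hbar (- a) = - subst_hbar a"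
  using subst_hbar_add[of "- a" a] by (simp add: eq_neg_iff_add_eq_0)

lemma subst_hbar_diff [simp]: "subst_hbar (a - b) = subst_hbar a - subst_hbar b"
  using subst_hbar_add[of a "- b"] by simp

lemma subst_hbar_power [simp]: "subst_hbar (a ^ n) = subst_hbar a ^ n"
  by (induction n) simp_all

lemma subst_hbar_2 [simp]: "subst_hbar 2 = 2"
  using subst_hbar_add[of 1 1] by (simp add: one_add_one)

lemma subst_hbar_hbar [simp]: "subst_hbar hbar = 1 - fps_X"
  by (simp add: subst_hbar_def hbar_def map_poly_pCons)

abbreviation tvar_fps :: "rat poly fps" where
  "tvar_fps \<equiv> fps_const [:0, 1:]"

lemma subst_hbar_tvar [simp]: "subst_hbar tvar = tvar_fps"
  by (simp add: subst_hbar_def tvar_def map_poly_pCons)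

definition linear_eval :: "(nat list \<Rightarrow> rat poly fps) \<Rightarrow> hmod \<Rightarrow> rat poly fps" where
  "linear_eval \<phi> X = (\<Sum>u\<in>Poly_Mapping.keys X. subst_hbar (Poly_Mapping.lookup X u) * \<phi> u)"

lemma Zqt_eq_linear_eval: "Zqt = linear_eval Zhat_word"
  by (simp add: fun_eq_iff Zqt_def linear_eval_def)

lemma linear_eval_superset:
  assumes "finite K" "Poly_Mapping.keys X \<subseteq> K"
  shows "linear_eval \<phi> X = (\<Sum>u\<in>K. subst_hbar (Poly_Mapping.lookup X u) * \<phi> u)"
  unfolding linear_eval_def
  by (rule sum.mono_neutral_left[OF assms]) (auto simp: in_keys_iff)

lemma linear_eval_0 [simp]: "linear_eval \<phi> 0 = 0"
  by (simp add: linear_eval_def)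

lemma linear_eval_add [simp]: "linear_eval \<phi> (X + Y) = linear_eval \<phi> X + linear_eval \<phi> Y"
proof -
  let ?K = "Poly_Mapping.keys X \<union> Poly_Mapping.keys Y"
  have "linear_eval \<phi> (X + Y) = (\<Sum>u\<in>?K. subst_hbar (Poly_Mapping.lookup (X + Y) u) * \<phi> u)"
    by (rule linear_eval_superset) (auto simp: keys_add)
  also have "\<dots> = (\<Sum>u\<in>?K. subst_hbar (Poly_Mapping.lookup X u) * \<phi> u)
       + (\<Sum>u\<in>?K. subst_hbar (Poly_Mapping.lookup Y u) * \<phi> u)"
    by (simp add: lookup_add distrib_right sum.distrib)
  also have "\<dots> = linear_eval \<phi> X + linear_eval \<phi> Y"
    by (subst (1 2) linear_eval_superset[of ?K]) auto
  finally show ?thesis .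
qed

lemma lookup_scal [simp]: "Poly_Mapping.lookup (scal c X) u = c * Poly_Mapping.lookup X u"
  by (simp add: scal_def map.rep_eq when_def)

lemma keys_scal: "Poly_Mapping.keys (scal c X) \<subseteq> Poly_Mapping.keys X"
  by (auto simp: in_keys_iff)

lemma linear_eval_scal [simp]: "linear_eval \<phi> (scal c X) = subst_hbar c * linear_eval \<phi> X"
proof -
  have "linear_eval \<phi> (scal c X)
      = (\<Sum>u\<in>Poly_Mapping.keys X. subst_hbar (Poly_Mapping.lookup (scal c X) u) * \<phi> u)"
    by (rule linear_eval_superset) (auto simp: keys_scal)
  then show ?thesis by (simp add: linear_eval_def sum_distrib_left mult.assoc)
qed

lemma linear_eval_sum: "linear_eval \<phi> (\<Sum>x\<in>A. X x) = (\<Sum>x\<in>A. linear_eval \<phi> (X x))"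
  by (induction A rule: infinite_finite_induct) auto

lemma linear_eval_word [simp]: "linear_eval \<phi> (word u) = \<phi> u"
  by (simp add: linear_eval_def word_def)

lemma linear_eval_lin: "linear_eval \<phi> (lin f X) = linear_eval (\<lambda>u. linear_eval \<phi> (f u)) X"
  by (simp only: lin_def linear_eval_sum linear_eval_scal) (simp add: linear_eval_def)

lemma linear_eval_cong:
  "(\<And>u. u \<in> Poly_Mapping.keys X \<Longrightarrow> \<phi> u = \<psi> u) \<Longrightarrow> linear_eval \<phi> X = linear_eval \<psi> X"
  by (simp add: linear_eval_def)

lemma linear_eval_fun_add: "linear_eval (\<lambda>u. \<phi> u + \<psi> u) X = linear_eval \<phi> X + linear_eval \<psi> X"
  by (simp add: linear_eval_def distrib_left sum.distrib)

lemma linear_eval_fun_cmult: "linear_eval (\<lambda>u. c * \<phi> u) X = c * linear_eval \<phi> X"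
  by (simp add: linear_eval_def sum_distrib_left mult.left_commute)

lemma linear_eval_fun_zero: "linear_eval (\<lambda>u. 0) X = 0"
  by (simp add: linear_eval_def)

lemma linear_eval_zcons: "linear_eval \<phi> (zcons i X) = linear_eval (\<lambda>u. \<phi> (i # u)) X"
  by (simp add: zcons_def linear_eval_lin)

lemma linear_eval_circ: "linear_eval \<phi> (circ i X) = linear_eval (\<lambda>u. linear_eval \<phi> (circ_word i u)) X"
  by (simp add: circ_def linear_eval_lin)

lemma linear_eval_tprod:
  "linear_eval \<phi> (tprod v w) = (\<Sum>u\<in>Poly_Mapping.keys v. \<Sum>u'\<in>Poly_Mapping.keys w.
     subst_hbar (Poly_Mapping.lookup v u) * subst_hbar (Poly_Mapping.lookup w u') * linear_eval \<phi> (tprod_word u u'))"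
  by (simp add: tprod_def linear_eval_sum)

definition positive_indices :: "nat list set" where
  "positive_indices = {u. \<forall>k\<in>set u. 1 \<le> k}"

definition admissible_indices :: "nat list set" where
  "admissible_indices = {u \<in> positive_indices. u \<noteq> [] \<longrightarrow> 2 \<le> hd u}"

lemma admissible_subset_positive: "admissible_indices \<subseteq> positive_indices"
  by (auto simp: admissible_indices_def)

lemma Cons_positive_indices [simp]: "k # u \<in> positive_indices \<longleftrightarrow> 1 \<le> k \<and> u \<in> positive_indices"
  by (simp add: positive_indices_def)

lemma H0_keys_admissible: "v \<in> H0 \<Longrightarrow> Poly_Mapping.keys v \<subseteq> admissible_indices"
  by (auto simp: H0_def admissible_indices_def positive_indices_def)

lemma keys_add_subsetI:
  "Poly_Mapping.keys A \<subseteq> S \<Longrightarrow> Poly_Mapping.keys B \<subseteq> S \<Longrightarrow> Poly_Mapping.keys (A + B) \<subseteq> S"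
  using keys_add[of A B] by blast

lemma keys_scal_subsetI: "Poly_Mapping.keys A \<subseteq> S \<Longrightarrow> Poly_Mapping.keys (scal c A) \<subseteq> S"
  using keys_scal[of c A] by blast

lemma keys_lin: "Poly_Mapping.keys (lin f X) \<subseteq> (\<Union>u\<in>Poly_Mapping.keys X. Poly_Mapping.keys (f u))"
  unfolding lin_def using keys_sum keys_scal by fastforce

lemma keys_zcons: "Poly_Mapping.keys (zcons k X) \<subseteq> (\<lambda>u. k # u) ` Poly_Mapping.keys X"
  unfolding zcons_def using keys_lin[of "\<lambda>u. word (k # u)" X] by (auto simp: word_def)

lemma keys_circ:
  "Poly_Mapping.keys (circ k X)
     \<subseteq> {(k + j) # y |j y. j # y \<in> Poly_Mapping.keys X} \<union> {(k + j - 1) # y |j y. j # y \<in> Poly_Mapping.keys X}"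
proof
  fix w assume "w \<in> Poly_Mapping.keys (circ k X)"
  then obtain u where u: "u \<in> Poly_Mapping.keys X" "w \<in> Poly_Mapping.keys (circ_word k u)"
    using keys_lin[of "circ_word k" X] by (auto simp: circ_def)
  then obtain j y where "u = j # y" by (cases u) auto
  with u show "w \<in> {(k + j) # y |j y. j # y \<in> Poly_Mapping.keys X}
      \<union> {(k + j - 1) # y |j y. j # y \<in> Poly_Mapping.keys X}"
    using keys_add keys_scal by (fastforce simp: word_def)
qed

lemma keys_zcons_positive:
  "Poly_Mapping.keys X \<subseteq> positive_indices \<Longrightarrow> 1 \<le> k \<Longrightarrow>
     Poly_Mapping.keys (zcons k X) \<subseteq> positive_indices"
  using keys_zcons[of k X] by (auto simp: subset_iff)

lemma keys_zcons_admissible: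
  "Poly_Mapping.keys X \<subseteq> positive_indices \<Longrightarrow> 2 \<le> k \<Longrightarrow>
     Poly_Mapping.keys (zcons k X) \<subseteq> admissible_indices"
  using keys_zcons[of k X] by (auto simp: subset_iff admissible_indices_def)

lemma keys_circ_positive:
  "Poly_Mapping.keys X \<subseteq> positive_indices \<Longrightarrow> 1 \<le> k \<Longrightarrow>
     Poly_Mapping.keys (circ k X) \<subseteq> positive_indices"
  using keys_circ[of k X] by fastforce

lemma keys_circ_admissible:
  "Poly_Mapping.keys X \<subseteq> positive_indices \<Longrightarrow> 2 \<le> k \<Longrightarrow>
     Poly_Mapping.keys (circ k X) \<subseteq> admissible_indices"
  using keys_circ[of k X] by (fastforce simp: admissible_indices_def)

lemma keys_tprod_word_positive:
  "u \<in> positive_indices \<Longrightarrow> v \<in> positive_indices \<Longrightarrow>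
     Poly_Mapping.keys (tprod_word u v) \<subseteq> positive_indices"
proof (induction u v rule: tprod_word.induct)
  case (3 i u j v)
  then have ij: "1 \<le> i" "1 \<le> j" "1 \<le> i + j" "1 \<le> i + j - 1" by auto
  from 3 have IH: "Poly_Mapping.keys (tprod_word u (j # v)) \<subseteq> positive_indices"
    "Poly_Mapping.keys (tprod_word (i # u) v) \<subseteq> positive_indices"
    "Poly_Mapping.keys (tprod_word u v) \<subseteq> positive_indices"
    by auto
  show ?case
    unfolding tprod_word.simps
    by (intro keys_add_subsetI keys_scal_subsetI keys_zcons_positive keys_circ_positive IH ij)
qed (auto simp: word_def)

lemma keys_tprod_word_admissible:
  assumes "u \<in> admissible_indices" "v \<in> admissible_indices"
  shows "Poly_Mapping.keys (tprod_word u v) \<subseteq> admissible_indices"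
proof (cases u; cases v)
  fix i u' j v' assume uv: "u = i # u'" "v = j # v'"
  with assms have "2 \<le> i" "2 \<le> j" "u' \<in> positive_indices" "v' \<in> positive_indices"
    by (auto simp: admissible_indices_def)
  then show ?thesis
    unfolding uv tprod_word.simps
    by (intro keys_add_subsetI keys_scal_subsetI keys_zcons_admissible keys_circ_admissible
        keys_tprod_word_positive) (use assms uv in \<open>auto simp: admissible_indices_def\<close>)
qed (use assms in \<open>auto simp: word_def\<close>)

lemma keys_tprod_admissible:
  assumes "Poly_Mapping.keys v \<subseteq> admissible_indices" "Poly_Mapping.keys w \<subseteq> admissible_indices"
  shows "Poly_Mapping.keys (tprod v w) \<subseteq> admissible_indices"
  unfolding tprod_def
  by (intro order.trans[OF keys_sum] UN_least order.trans[OF keys_scal] keys_tprod_word_admissible)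
    (use assms in auto)

lemma const_poly_sum: "[:sum f A:] = (\<Sum>x\<in>A. [:f x:])"
proof (induction A rule: infinite_finite_induct)
  case (insert x F)
  have "[:f x + sum f F:] = [:f x:] + [:sum f F:]" by simp
  with insert show ?case by simp
qed auto

lemma embed_fps_nth [simp]: "embed_fps f $ n = [:f $ n:]"
  by (simp add: embed_fps_def)

lemma embed_fps_add [simp]: "embed_fps (f + g) = embed_fps f + embed_fps g"
  by (rule fps_ext) simp

lemma embed_fps_diff [simp]: "embed_fps (f - g) = embed_fps f - embed_fps g"
  by (rule fps_ext) simp

lemma embed_fps_mult [simp]: "embed_fps (f * g) = embed_fps f * embed_fps g"
  by (rule fps_ext) (simp add: fps_mult_nth const_poly_sum mult.commute)

lemma embed_fps_1 [simp]: "embed_fps 1 = 1"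
  by (rule fps_ext) simp

lemma embed_fps_X [simp]: "embed_fps fps_X = fps_X"
  by (rule fps_ext) (simp add: fps_X_def)

lemma embed_fps_sum: "embed_fps (sum f A) = (\<Sum>x\<in>A. embed_fps (f x))"
  by (induction A rule: infinite_finite_induct) (auto simp: fps_eq_iff)

lemma embed_fps_cutoff: "fps_cutoff n (embed_fps f) = embed_fps (fps_cutoff n f)"
  by (simp add: fps_eq_iff)

definition qterm :: "nat \<Rightarrow> nat \<Rightarrow> rat fps" where
  "qterm k j = fps_X ^ ((k - 1) * j) * inverse (qint j) ^ k"

definition qterm_t :: "nat \<Rightarrow> nat \<Rightarrow> rat poly fps" where
  "qterm_t k j = embed_fps (qterm k j)"

lemma qint_mult_one_minus_X: "qint j * (1 - fps_X) = 1 - fps_X ^ j"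
  by (simp add: qint_def fps_divide_unit mult.assoc inverse_mult_eq_1)

lemma qterm_mult_ring_identity:
  fixes x y :: "'a::comm_ring_1"
  shows "x ^ (a * j) * y ^ Suc a * (x ^ (b * j) * y ^ Suc b)
       = x ^ (Suc (a + b) * j) * y ^ Suc (Suc (a + b)) + ((1 - x ^ j) * y) * (x ^ ((a + b) * j) * y ^ Suc (a + b))"
  by (simp add: power_add add_mult_distrib algebra_simps)

text \<open>For \<open>j = 0\<close> all three terms vanish, as \<open>qint 0 = 0\<close> and \<open>inverse 0 = 0\<close>.\<close>

lemma qterm_mult:
  assumes "1 \<le> a" "1 \<le> b"
  shows "qterm a j * qterm b j = qterm (a + b) j + (1 - fps_X) * qterm (a + b - 1) j"
proof (cases "j = 0")
  case True
  with assms show ?thesis by (simp add: qterm_def qint_def power_0_left)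
next
  case False
  obtain a' b' where ab: "a = Suc a'" "b = Suc b'" using assms by (cases a; cases b) auto
  define I where "I = inverse (qint j)"
  have "I * qint j = 1"
    unfolding I_def using False by (intro inverse_mult_eq_1) (simp add: qint_def fps_divide_unit)
  then have "1 - fps_X = (1 - fps_X ^ j) * I"
    by (metis mult.assoc mult.commute mult_1 qint_mult_one_minus_X)
  then show ?thesis
    unfolding qterm_def I_def[symmetric] ab using qterm_mult_ring_identity[of fps_X a' j I b'] by simp
qed

lemma qterm_t_mult:
  assumes "1 \<le> a" "1 \<le> b"
  shows "qterm_t a j * qterm_t b j = qterm_t (a + b) j + (1 - fps_X) * qterm_t (a + b - 1) j"
  unfolding qterm_t_def using arg_cong[OF qterm_mult[OF assms, of j], of embed_fps] by simp

section \<open>Truncated multiple sums with equalities weighted by \<open>t\<close>\<close>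

text \<open>\<open>zeta_t_lead j u\<close> collects the terms whose first summation variable equals \<open>j\<close>;
  the second summation variable is either smaller or, with weight \<open>t\<close>, equal to it.\<close>

fun zeta_t_lead :: "nat \<Rightarrow> nat list \<Rightarrow> rat poly fps" where
  "zeta_t_lead j [] = 0"
| "zeta_t_lead j (k # u) =
     qterm_t k j * ((if u = [] then 1 else (\<Sum>i\<in>{1..<j}. zeta_t_lead i u)) + tvar_fps * zeta_t_lead j u)"

definition zeta_t_trunc :: "nat \<Rightarrow> nat list \<Rightarrow> rat poly fps" where
  "zeta_t_trunc m u = (if u = [] then 1 else (\<Sum>j\<in>{1..<m}. zeta_t_lead j u))"

lemma zeta_t_lead_Cons:
  "zeta_t_lead j (k # u) = qterm_t k j * (zeta_t_trunc j u + tvar_fps * zeta_t_lead j u)"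
  by (simp add: zeta_t_trunc_def)

declare zeta_t_lead.simps(2) [simp del]

lemma zeta_t_trunc_Nil [simp]: "zeta_t_trunc m [] = 1"
  by (simp add: zeta_t_trunc_def)

lemma zeta_t_trunc_0_Cons [simp]: "zeta_t_trunc 0 (k # u) = 0"
  by (simp add: zeta_t_trunc_def)

lemma zeta_t_trunc_Suc:
  "zeta_t_trunc (Suc m) u = zeta_t_trunc m u + (if m = 0 then 0 else zeta_t_lead m u)"
  by (cases u) (auto simp: zeta_t_trunc_def)

lemma zeta_t_trunc_single: "zeta_t_trunc m [k] = (\<Sum>j\<in>{1..<m}. qterm_t k j)"
  by (simp add: zeta_t_trunc_def zeta_t_lead_Cons)

section \<open>Multiplicativity of the truncated sums\<close>

lemma linear_eval_trunc_0_tprod_word: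
  "linear_eval (zeta_t_trunc 0) (tprod_word u v) = zeta_t_trunc 0 u * zeta_t_trunc 0 v"
proof -
  have zcons: "linear_eval (zeta_t_trunc 0) (zcons i X) = 0" for i X
    by (simp add: linear_eval_zcons linear_eval_fun_zero)
  have "linear_eval (zeta_t_trunc 0) (circ_word c u) = 0" for c u
    by (cases u) simp_all
  then have circ: "linear_eval (zeta_t_trunc 0) (circ c X) = 0" for c X
    by (simp add: linear_eval_circ linear_eval_fun_zero)
  show ?thesis
    by (cases u; cases v) (simp_all add: zcons circ)
qed

lemma linear_eval_lead_zcons:
  "linear_eval (zeta_t_lead m) (zcons k X)
     = qterm_t k m * (linear_eval (zeta_t_trunc m) X + tvar_fps * linear_eval (zeta_t_lead m) X)"
  by (simp only: linear_eval_zcons zeta_t_lead_Cons linear_eval_fun_cmult linear_eval_fun_add)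

lemma linear_eval_lead_circ_word:
  assumes "1 \<le> c" "u \<in> positive_indices"
  shows "linear_eval (zeta_t_lead m) (circ_word c u) = qterm_t c m * zeta_t_lead m u"
proof (cases u)
  case (Cons k w)
  with assms have k: "1 \<le> k" by simp
  define Z where "Z = zeta_t_trunc m w + tvar_fps * zeta_t_lead m w"
  have "linear_eval (zeta_t_lead m) (circ_word c u)
      = (qterm_t (c + k) m + (1 - fps_X) * qterm_t (c + k - 1) m) * Z"
    by (simp add: Cons Z_def zeta_t_lead_Cons distrib_right mult.assoc)
  also have "\<dots> = qterm_t c m * zeta_t_lead m u"
    unfolding qterm_t_mult[OF assms(1) k, symmetric] by (simp add: Cons Z_def zeta_t_lead_Cons mult.assoc)
  finally show ?thesis .
qed simp

lemma linear_eval_lead_circ: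
  assumes "Poly_Mapping.keys X \<subseteq> positive_indices" "1 \<le> c"
  shows "linear_eval (zeta_t_lead m) (circ c X) = qterm_t c m * linear_eval (zeta_t_lead m) X"
proof -
  have "linear_eval (zeta_t_lead m) (circ c X) = linear_eval (\<lambda>u. qterm_t c m * zeta_t_lead m u) X"
    unfolding linear_eval_circ
    by (rule linear_eval_cong) (use assms linear_eval_lead_circ_word in blast)
  then show ?thesis by (simp only: linear_eval_fun_cmult)
qed

text \<open>\<open>f\<close>, \<open>g\<close> stand for the leading factors of \<open>i # u\<close>, \<open>j # v\<close>, and \<open>a1\<close>, \<open>y1\<close>
  (\<open>b1\<close>, \<open>z1\<close>) for the truncated and the leading sum of \<open>u\<close> (\<open>v\<close>).\<close>

lemma stuffle_identity:
  fixes f g t a1 b1 y1 z1 Au Av Yu Yv :: "'a::comm_ring_1"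
  assumes "Yu = f * (a1 + t * y1)" "Yv = g * (b1 + t * z1)"
  shows "f * (a1 * Av + t * (y1 * Av + a1 * Yv + y1 * Yv)) + g * (Au * b1 + t * (Yu * b1 + Au * z1 + Yu * z1))
    + (1 - 2 * t) * (f * g * (a1 * b1 + t * (y1 * b1 + a1 * z1 + y1 * z1)))
    + (t\<^sup>2 - t) * (f * g * (y1 * b1 + a1 * z1 + y1 * z1)) = Yu * Av + Au * Yv + Yu * Yv"
  unfolding assms by (simp add: algebra_simps power2_eq_square)

lemma linear_eval_lead_tprod_word:
  assumes trunc: "\<And>u v. u \<in> positive_indices \<Longrightarrow> v \<in> positive_indices \<Longrightarrow>
      linear_eval (zeta_t_trunc m) (tprod_word u v) = zeta_t_trunc m u * zeta_t_trunc m v"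
  shows "u \<in> positive_indices \<Longrightarrow> v \<in> positive_indices \<Longrightarrow>
      linear_eval (zeta_t_lead m) (tprod_word u v)
        = zeta_t_lead m u * zeta_t_trunc m v + zeta_t_trunc m u * zeta_t_lead m v + zeta_t_lead m u * zeta_t_lead m v"
proof (induction u v rule: tprod_word.induct)
  case (3 i u j v)
  let ?A = "zeta_t_trunc m" and ?Y = "zeta_t_lead m" and ?L = "linear_eval"
  from "3.prems" have i: "1 \<le> i" "u \<in> positive_indices" and j: "1 \<le> j" "v \<in> positive_indices"
    by auto
  note IH = "3.IH"(1)[OF i(2) "3.prems"(2)] "3.IH"(2)[OF "3.prems"(1) j(2)] "3.IH"(3)[OF i(2) j(2)]
  note T = trunc[OF i(2) "3.prems"(2)] trunc[OF "3.prems"(1) j(2)] trunc[OF i(2) j(2)]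
  have K: "Poly_Mapping.keys (tprod_word u v) \<subseteq> positive_indices"
    by (rule keys_tprod_word_positive[OF i(2) j(2)])
  have ij: "1 \<le> i + j" "1 \<le> i + j - 1" using i j by auto
  have pair: "qterm_t (i + j) m * W + (1 - fps_X) * (qterm_t (i + j - 1) m * W) = qterm_t i m * qterm_t j m * W"
    for W
    by (simp add: qterm_t_mult[OF i(1) j(1)] algebra_simps)
  have "?L ?Y (tprod_word (i # u) (j # v))
      = ?L ?Y (zcons i (tprod_word u (j # v))) + ?L ?Y (zcons j (tprod_word (i # u) v))
      + (1 - 2 * tvar_fps) * (?L ?Y (zcons (i + j) (tprod_word u v))
          + (1 - fps_X) * ?L ?Y (zcons (i + j - 1) (tprod_word u v)))
      + (tvar_fps\<^sup>2 - tvar_fps) * (?L ?Y (circ (i + j) (tprod_word u v))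
          + (1 - fps_X) * ?L ?Y (circ (i + j - 1) (tprod_word u v)))"
    by (simp only: tprod_word.simps linear_eval_add linear_eval_scal subst_hbar_diff subst_hbar_mult
        subst_hbar_power subst_hbar_1 subst_hbar_2 subst_hbar_tvar subst_hbar_hbar)
  also have "\<dots>
      = qterm_t i m * (?L ?A (tprod_word u (j # v)) + tvar_fps * ?L ?Y (tprod_word u (j # v)))
      + qterm_t j m * (?L ?A (tprod_word (i # u) v) + tvar_fps * ?L ?Y (tprod_word (i # u) v))
      + (1 - 2 * tvar_fps) * (qterm_t i m * qterm_t j m
          * (?L ?A (tprod_word u v) + tvar_fps * ?L ?Y (tprod_word u v)))
      + (tvar_fps\<^sup>2 - tvar_fps) * (qterm_t i m * qterm_t j m * ?L ?Y (tprod_word u v))"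
    unfolding linear_eval_lead_zcons linear_eval_lead_circ[OF K ij(1)] linear_eval_lead_circ[OF K ij(2)] pair ..
  also have "\<dots> = ?Y (i # u) * ?A (j # v) + ?A (i # u) * ?Y (j # v) + ?Y (i # u) * ?Y (j # v)"
    unfolding IH T by (rule stuffle_identity) (simp_all only: zeta_t_lead_Cons)
  finally show ?case .
qed simp_all

lemma linear_eval_trunc_tprod_word:
  "u \<in> positive_indices \<Longrightarrow> v \<in> positive_indices \<Longrightarrow>
     linear_eval (zeta_t_trunc m) (tprod_word u v) = zeta_t_trunc m u * zeta_t_trunc m v"
proof (induction m arbitrary: u v)
  case 0
  show ?case by (rule linear_eval_trunc_0_tprod_word)
next
  case (Suc m)
  show ?case
  proof (cases "m = 0")
    case True
    then have "zeta_t_trunc (Suc m) = zeta_t_trunc 0"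
      by (simp add: fun_eq_iff zeta_t_trunc_Suc)
    then show ?thesis by (simp add: linear_eval_trunc_0_tprod_word)
  next
    case False
    then have step: "zeta_t_trunc (Suc m) = (\<lambda>u. zeta_t_trunc m u + zeta_t_lead m u)"
      by (simp add: fun_eq_iff zeta_t_trunc_Suc)
    show ?thesis
      unfolding step linear_eval_fun_add
      using Suc.IH linear_eval_lead_tprod_word[OF Suc.IH] Suc.prems by (simp add: algebra_simps)
  qed
qed

lemma linear_eval_trunc_tprod:
  assumes "Poly_Mapping.keys v \<subseteq> positive_indices" "Poly_Mapping.keys w \<subseteq> positive_indices"
  shows "linear_eval (zeta_t_trunc m) (tprod v w) = linear_eval (zeta_t_trunc m) v * linear_eval (zeta_t_trunc m) w"
proof -
  have "linear_eval (zeta_t_trunc m) (tprod v w) = (\<Sum>u\<in>Poly_Mapping.keys v. \<Sum>u'\<in>Poly_Mapping.keys w.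
      subst_hbar (Poly_Mapping.lookup v u) * subst_hbar (Poly_Mapping.lookup w u') * (zeta_t_trunc m u * zeta_t_trunc m u'))"
    unfolding linear_eval_tprod
  proof (intro sum.cong refl)
    fix u u' assume "u \<in> Poly_Mapping.keys v" "u' \<in> Poly_Mapping.keys w"
    with assms have "u \<in> positive_indices" "u' \<in> positive_indices" by blast+
    then show "subst_hbar (Poly_Mapping.lookup v u) * subst_hbar (Poly_Mapping.lookup w u')
        * linear_eval (zeta_t_trunc m) (tprod_word u u')
      = subst_hbar (Poly_Mapping.lookup v u) * subst_hbar (Poly_Mapping.lookup w u')
        * (zeta_t_trunc m u * zeta_t_trunc m u')"
      by (simp only: linear_eval_trunc_tprod_word)
  qed
  also have "\<dots> = linear_eval (zeta_t_trunc m) v * linear_eval (zeta_t_trunc m) w"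
    by (simp add: linear_eval_def sum_product mult_ac)
  finally show ?thesis .
qed

lemma fps_cutoff_mult: "fps_cutoff n (f * g) = fps_cutoff n (fps_cutoff n f * fps_cutoff n g)"
  by (auto simp: fps_eq_iff fps_cutoff_left_mult_nth fps_cutoff_right_mult_nth)

lemma fps_cutoff_mult_cong:
  "fps_cutoff n f = fps_cutoff n f' \<Longrightarrow> fps_cutoff n g = fps_cutoff n g' \<Longrightarrow>
     fps_cutoff n (f * g) = fps_cutoff n (f' * g')"
  by (metis fps_cutoff_mult)

lemma fps_cutoff_sum: "fps_cutoff n (sum f A) = (\<Sum>x\<in>A. fps_cutoff n (f x))"
  by (induction A rule: infinite_finite_induct) (simp_all add: fps_cutoff_add)

lemma fps_eq_if_cutoff_eq: "(\<And>n. fps_cutoff n f = fps_cutoff n g) \<Longrightarrow> f = g"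
  by (metis fps_cutoff_eq_fps_cutoff_iff fps_ext lessI)

lemma linear_eval_cutoff_cong:
  "(\<And>u. u \<in> Poly_Mapping.keys X \<Longrightarrow> fps_cutoff n (\<phi> u) = fps_cutoff n (\<psi> u)) \<Longrightarrow>
     fps_cutoff n (linear_eval \<phi> X) = fps_cutoff n (linear_eval \<psi> X)"
  unfolding linear_eval_def fps_cutoff_sum by (intro sum.cong refl fps_cutoff_mult_cong)

definition zeta_q_indices :: "nat list \<Rightarrow> nat list set" where
  "zeta_q_indices ks = {ms. length ms = length ks \<and> sorted_wrt (>) ms \<and> (\<forall>m\<in>set ms. 1 \<le> m)}"

definition zeta_q_indices_below :: "nat \<Rightarrow> nat list \<Rightarrow> nat list set" where
  "zeta_q_indices_below m ks = {ms \<in> zeta_q_indices ks. \<forall>x\<in>set ms. x < m}"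

definition zeta_q_summand :: "nat list \<Rightarrow> nat list \<Rightarrow> rat fps" where
  "zeta_q_summand ks ms = (\<Prod>a<length ks. fps_X ^ ((ks ! a - 1) * (ms ! a)) * inverse (qint (ms ! a)) ^ (ks ! a))"

fun zeta_q_trunc :: "nat \<Rightarrow> nat list \<Rightarrow> rat fps" where
  "zeta_q_trunc m [] = 1"
| "zeta_q_trunc m (k # ks) = (\<Sum>j\<in>{1..<m}. qterm k j * zeta_q_trunc j ks)"

declare zeta_q_trunc.simps(2) [simp del]

lemma zeta_q_eq_infsum: "zeta_q ks = infsum (zeta_q_summand ks) (zeta_q_indices ks)"
  unfolding zeta_q_def zeta_q_summand_def zeta_q_indices_def ..

lemma zeta_q_summand_Cons: "zeta_q_summand (k # ks) (j # ms) = qterm k j * zeta_q_summand ks ms"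
  unfolding zeta_q_summand_def qterm_def by (simp add: prod.lessThan_Suc_shift del: prod.lessThan_Suc)

lemma zeta_q_indices_below_Nil: "zeta_q_indices_below m [] = {[]}"
  by (auto simp: zeta_q_indices_below_def zeta_q_indices_def)

lemma zeta_q_indices_below_Cons:
  "zeta_q_indices_below m (k # ks) = (\<lambda>(j, ms). j # ms) ` (SIGMA j:{1..<m}. zeta_q_indices_below j ks)"
proof safe
  fix ms assume "ms \<in> zeta_q_indices_below m (k # ks)"
  then obtain j ms' where "ms = j # ms'" "j \<in> {1..<m}" "ms' \<in> zeta_q_indices_below j ks"
    by (cases ms) (auto simp: zeta_q_indices_below_def zeta_q_indices_def)
  then show "ms \<in> (\<lambda>(j, ms). j # ms) ` (SIGMA j:{1..<m}. zeta_q_indices_below j ks)"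
    by force
qed (auto simp: zeta_q_indices_below_def zeta_q_indices_def)

lemma finite_zeta_q_indices_below: "finite (zeta_q_indices_below m ks)"
proof (rule finite_subset)
  show "zeta_q_indices_below m ks \<subseteq> {ms. set ms \<subseteq> {..<m} \<and> length ms = length ks}"
    by (auto simp: zeta_q_indices_below_def zeta_q_indices_def)
qed (rule finite_lists_length_eq, simp)

lemma sum_zeta_q_summand_below:
  "sum (zeta_q_summand ks) (zeta_q_indices_below m ks) = zeta_q_trunc m ks"
proof (induction ks arbitrary: m)
  case Nil
  then show ?case by (simp add: zeta_q_indices_below_Nil zeta_q_summand_def)
next
  case (Cons k ks)
  have "inj_on (\<lambda>(j, ms). j # ms) (SIGMA j:{1..<m}. zeta_q_indices_below j ks)"
    by (auto simp: inj_on_def)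
  then have "sum (zeta_q_summand (k # ks)) (zeta_q_indices_below m (k # ks))
      = (\<Sum>(j, ms)\<in>(SIGMA j:{1..<m}. zeta_q_indices_below j ks). zeta_q_summand (k # ks) (j # ms))"
    unfolding zeta_q_indices_below_Cons by (subst sum.reindex) (simp_all add: case_prod_unfold)
  also have "\<dots> = (\<Sum>j\<in>{1..<m}. \<Sum>ms\<in>zeta_q_indices_below j ks. qterm k j * zeta_q_summand ks ms)"
    by (subst sum.Sigma[symmetric]) (auto simp: finite_zeta_q_indices_below zeta_q_summand_Cons)
  finally have "sum (zeta_q_summand (k # ks)) (zeta_q_indices_below m (k # ks))
      = (\<Sum>j\<in>{1..<m}. \<Sum>ms\<in>zeta_q_indices_below j ks. qterm k j * zeta_q_summand ks ms)" .
  then show ?case by (simp add: Cons.IH zeta_q_trunc.simps(2) flip: sum_distrib_left)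
qed

lemma zeta_q_summand_nth_outside:
  assumes "ms \<in> zeta_q_indices (k # ks)" "ms \<notin> zeta_q_indices_below m (k # ks)" "2 \<le> k" "n < m"
  shows "zeta_q_summand (k # ks) ms $ n = 0"
proof -
  obtain j ms' where ms: "ms = j # ms'" and below_j: "\<forall>y\<in>set ms'. y < j"
    using assms(1) by (cases ms) (auto simp: zeta_q_indices_def)
  have "m \<le> j" using assms(1,2) below_j by (auto simp: zeta_q_indices_below_def ms)
  moreover have "1 * j \<le> (k - 1) * j" using assms(3) by (intro mult_le_mono1) simp
  ultimately have "n < (k - 1) * j" using assms(4) by linarith
  then show ?thesis
    unfolding ms zeta_q_summand_Cons qterm_def mult.assoc fps_X_power_mult_nth by simp
qed

lemma sum_zeta_q_summand_nth:
  assumes "2 \<le> k" "n < m" "finite Y" "zeta_q_indices_below m (k # ks) \<subseteq> Y" "Y \<subseteq> zeta_q_indices (k # ks)"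
  shows "sum (zeta_q_summand (k # ks)) Y $ n = zeta_q_trunc m (k # ks) $ n"
proof -
  let ?B = "zeta_q_indices_below m (k # ks)"
  have "sum (zeta_q_summand (k # ks)) Y = sum (zeta_q_summand (k # ks)) ?B + sum (zeta_q_summand (k # ks)) (Y - ?B)"
    using sum.subset_diff[OF assms(4,3)] by (simp add: add.commute)
  moreover have "sum (zeta_q_summand (k # ks)) (Y - ?B) $ n = 0"
    unfolding fps_sum_nth
    by (rule sum.neutral) (use zeta_q_summand_nth_outside assms in blast)
  ultimately show ?thesis by (simp add: sum_zeta_q_summand_below)
qed

lemma zeta_q_nth:
  assumes "2 \<le> k" "n < m"
  shows "zeta_q (k # ks) $ n = zeta_q_trunc m (k # ks) $ n"
proof -
  let ?p = "k # ks"
  define L where "L = Abs_fps (\<lambda>n. zeta_q_trunc (Suc n) ?p $ n)"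
  have below_subset: "zeta_q_indices_below m' ?p \<subseteq> zeta_q_indices ?p" for m'
    by (auto simp: zeta_q_indices_below_def)
  have "(zeta_q_summand ?p has_sum L) (zeta_q_indices ?p)"
    unfolding has_sum_def
  proof (rule tendsto_fpsI)
    fix n
    show "\<forall>\<^sub>F Y in finite_subsets_at_top (zeta_q_indices ?p). sum (zeta_q_summand ?p) Y $ n = L $ n"
      unfolding eventually_finite_subsets_at_top
    proof (intro exI conjI allI impI)
      show "finite (zeta_q_indices_below (Suc n) ?p)" by (rule finite_zeta_q_indices_below)
      show "zeta_q_indices_below (Suc n) ?p \<subseteq> zeta_q_indices ?p" by (rule below_subset)
      fix Y assume "finite Y \<and> zeta_q_indices_below (Suc n) ?p \<subseteq> Y \<and> Y \<subseteq> zeta_q_indices ?p"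
      then show "sum (zeta_q_summand ?p) Y $ n = L $ n"
        using sum_zeta_q_summand_nth[OF assms(1) lessI] by (simp add: L_def)
    qed
  qed
  then have "zeta_q ?p = L"
    unfolding zeta_q_eq_infsum by (rule infsumI)
  moreover have "zeta_q_indices_below (Suc n) ?p \<subseteq> zeta_q_indices_below m ?p"
    using assms(2) by (auto simp: zeta_q_indices_below_def)
  then have "sum (zeta_q_summand ?p) (zeta_q_indices_below m ?p) $ n = zeta_q_trunc (Suc n) ?p $ n"
    by (intro sum_zeta_q_summand_nth assms(1) lessI finite_zeta_q_indices_below below_subset)
  ultimately show ?thesis
    by (simp add: L_def sum_zeta_q_summand_below)
qed

lemma zeta_q_cutoff: "2 \<le> k \<Longrightarrow> fps_cutoff m (zeta_q (k # ks)) = fps_cutoff m (zeta_q_trunc m (k # ks))"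
  by (simp add: fps_cutoff_eq_fps_cutoff_iff zeta_q_nth)

lemma length_fill_le: "length (fill ks bs) \<le> length ks"
  by (induction ks bs rule: fill.induct) auto

lemma sum_list_fill_le: "sum_list (fill ks bs) \<le> sum_list ks"
  by (induction ks bs rule: fill.induct) auto

lemma fill_Cons_hd:
  "length bs + 1 = length ks \<Longrightarrow> ks \<in> positive_indices \<Longrightarrow> \<exists>k p. fill ks bs = k # p \<and> hd ks \<le> k"
  by (induction ks bs rule: fill.induct) fastforce+

lemma fillings_eq: "fillings n = {bs. length bs = n}"
proof -
  have "set bs \<subseteq> {Comma, Plus, MinusPlus}" for bs
    by (auto intro: box.exhaust)
  then show ?thesis by (auto simp: fillings_def set_n_lists)
qed

lemma finite_fillings [simp]: "finite (fillings n)"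
  by (simp add: fillings_def)

lemma sum_fillings_Suc:
  "(\<Sum>bs\<in>fillings (Suc n). f bs) = (\<Sum>bs\<in>fillings n. f (Comma # bs))
     + (\<Sum>bs\<in>fillings n. f (Plus # bs)) + (\<Sum>bs\<in>fillings n. f (MinusPlus # bs))"
proof -
  let ?F = "fillings n"
  have split: "fillings (Suc n) = ((#) Comma ` ?F \<union> (#) Plus ` ?F) \<union> (#) MinusPlus ` ?F"
  proof safe
    fix bs assume "bs \<in> fillings (Suc n)"
    then obtain b bs' where "bs = b # bs'" "bs' \<in> ?F" by (cases bs) (auto simp: fillings_eq)
    then show "bs \<in> (#) Comma ` ?F" if "bs \<notin> (#) MinusPlus ` ?F" "bs \<notin> (#) Plus ` ?F"
      using that by (cases b) auto
  qed (auto simp: fillings_eq)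
  show ?thesis
    unfolding split by (subst sum.union_disjoint; (auto)?)+ (simp add: sum.reindex)
qed

definition fill_term :: "(nat list \<Rightarrow> rat fps) \<Rightarrow> nat list \<Rightarrow> box list \<Rightarrow> rat poly fps" where
  "fill_term z ks bs = (1 - fps_X) ^ (sum_list ks - sum_list (fill ks bs)) * embed_fps (z (fill ks bs))
     * fps_const ([:0, 1:] ^ (length ks - length (fill ks bs)))"

definition fill_sum :: "(nat list \<Rightarrow> rat fps) \<Rightarrow> nat list \<Rightarrow> rat poly fps" where
  "fill_sum z ks = (\<Sum>bs\<in>fillings (length ks - 1). fill_term z ks bs)"

lemma zeta_qt_eq_fill_sum: "zeta_qt = fill_sum zeta_q"
  by (simp add: fun_eq_iff zeta_qt_def fill_sum_def fill_term_def Let_def)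

lemma fill_sum_single: "fill_sum z [k] = embed_fps (z [k])"
  by (simp add: fill_sum_def fill_term_def fillings_eq)

lemma fill_term_Comma:
  "fill_term (zeta_q_trunc m) (k1 # k2 # rest) (Comma # bs)
     = (\<Sum>j\<in>{1..<m}. qterm_t k1 j * fill_term (zeta_q_trunc j) (k2 # rest) bs)"
  by (simp add: fill_term_def zeta_q_trunc.simps(2) embed_fps_sum qterm_t_def sum_distrib_left
      sum_distrib_right mult_ac)

lemma fill_term_Plus:
  "fill_term z (k1 # k2 # rest) (Plus # bs) = tvar_fps * fill_term z ((k1 + k2) # rest) bs"
proof -
  have "length (k1 # k2 # rest) - length (fill ((k1 + k2) # rest) bs)
      = Suc (length ((k1 + k2) # rest) - length (fill ((k1 + k2) # rest) bs))"
    using length_fill_le[of "(k1 + k2) # rest" bs] by simp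
  moreover have "sum_list (k1 # k2 # rest) = sum_list ((k1 + k2) # rest)" by simp
  ultimately show ?thesis
    unfolding fill_term_def fill.simps(3) by (simp only: power_Suc fps_const_mult[symmetric] ac_simps)
qed

lemma fill_term_MinusPlus:
  assumes "1 \<le> k1 + k2"
  shows "fill_term z (k1 # k2 # rest) (MinusPlus # bs)
    = tvar_fps * ((1 - fps_X) * fill_term z ((k1 + k2 - 1) # rest) bs)"
proof -
  let ?p = "fill ((k1 + k2 - 1) # rest) bs"
  have "length (k1 # k2 # rest) - length ?p = Suc (length ((k1 + k2 - 1) # rest) - length ?p)"
    using length_fill_le[of "(k1 + k2 - 1) # rest" bs] by simp
  moreover have "sum_list (k1 # k2 # rest) - sum_list ?p = Suc (sum_list ((k1 + k2 - 1) # rest) - sum_list ?p)"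
    using sum_list_fill_le[of "(k1 + k2 - 1) # rest" bs] assms by simp
  ultimately show ?thesis
    by (simp add: fill_term_def mult_ac)
qed

lemma fill_sum_Cons_Cons:
  assumes "1 \<le> k1 + k2"
  shows "fill_sum (zeta_q_trunc m) (k1 # k2 # rest)
    = (\<Sum>j\<in>{1..<m}. qterm_t k1 j * fill_sum (zeta_q_trunc j) (k2 # rest))
      + tvar_fps * (fill_sum (zeta_q_trunc m) ((k1 + k2) # rest)
        + (1 - fps_X) * fill_sum (zeta_q_trunc m) ((k1 + k2 - 1) # rest))"
proof -
  let ?F = "fillings (length rest)"
  have "fill_sum (zeta_q_trunc m) (k1 # k2 # rest)
      = (\<Sum>bs\<in>?F. \<Sum>j\<in>{1..<m}. qterm_t k1 j * fill_term (zeta_q_trunc j) (k2 # rest) bs)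
      + tvar_fps * (\<Sum>bs\<in>?F. fill_term (zeta_q_trunc m) ((k1 + k2) # rest) bs)
      + tvar_fps * ((1 - fps_X) * (\<Sum>bs\<in>?F. fill_term (zeta_q_trunc m) ((k1 + k2 - 1) # rest) bs))"
    by (simp add: fill_sum_def sum_fillings_Suc fill_term_Comma fill_term_Plus fill_term_MinusPlus[OF assms]
        sum_distrib_left)
  also have "\<dots> = (\<Sum>j\<in>{1..<m}. qterm_t k1 j * fill_sum (zeta_q_trunc j) (k2 # rest))
      + tvar_fps * fill_sum (zeta_q_trunc m) ((k1 + k2) # rest)
      + tvar_fps * ((1 - fps_X) * fill_sum (zeta_q_trunc m) ((k1 + k2 - 1) # rest))"
    by (subst sum.swap) (simp add: fill_sum_def sum_distrib_left)
  finally show ?thesis by (simp only: distrib_left add.assoc)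
qed

lemma fill_sum_cutoff_cong:
  assumes "\<And>bs. bs \<in> fillings (length ks - 1) \<Longrightarrow> fps_cutoff n (z (fill ks bs)) = fps_cutoff n (z' (fill ks bs))"
  shows "fps_cutoff n (fill_sum z ks) = fps_cutoff n (fill_sum z' ks)"
  unfolding fill_sum_def fps_cutoff_sum fill_term_def
  by (intro sum.cong refl fps_cutoff_mult_cong) (simp add: embed_fps_cutoff assms)

section \<open>The fillings as a sum over weakly decreasing indices\<close>

lemma zeta_t_lead_merge:
  assumes "1 \<le> a" "1 \<le> b"
  shows "zeta_t_lead j ((a + b) # w) + (1 - fps_X) * zeta_t_lead j ((a + b - 1) # w) = qterm_t a j * zeta_t_lead j (b # w)"
proof -
  define Z where "Z = zeta_t_trunc j w + tvar_fps * zeta_t_lead j w"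
  have "zeta_t_lead j ((a + b) # w) + (1 - fps_X) * zeta_t_lead j ((a + b - 1) # w)
      = (qterm_t (a + b) j + (1 - fps_X) * qterm_t (a + b - 1) j) * Z"
    by (simp add: Z_def zeta_t_lead_Cons distrib_right mult.assoc)
  also have "\<dots> = qterm_t a j * zeta_t_lead j (b # w)"
    unfolding qterm_t_mult[OF assms, symmetric] by (simp add: Z_def zeta_t_lead_Cons mult.assoc)
  finally show ?thesis .
qed

lemma zeta_t_trunc_merge:
  assumes "1 \<le> a" "1 \<le> b"
  shows "zeta_t_trunc m ((a + b) # w) + (1 - fps_X) * zeta_t_trunc m ((a + b - 1) # w)
    = (\<Sum>j\<in>{1..<m}. qterm_t a j * zeta_t_lead j (b # w))"
  unfolding zeta_t_trunc_def
  by (simp add: sum_distrib_left flip: sum.distrib zeta_t_lead_merge[OF assms])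

lemma zeta_t_trunc_Cons_Cons:
  "zeta_t_trunc m (k1 # k2 # rest) = (\<Sum>j\<in>{1..<m}. qterm_t k1 j * zeta_t_trunc j (k2 # rest))
     + tvar_fps * (\<Sum>j\<in>{1..<m}. qterm_t k1 j * zeta_t_lead j (k2 # rest))"
  unfolding zeta_t_trunc_def[of m "k1 # k2 # rest"]
  by (simp add: zeta_t_lead_Cons distrib_left sum.distrib sum_distrib_left mult_ac)

lemma fill_sum_eq_zeta_t_trunc:
  "ks \<in> positive_indices \<Longrightarrow> ks \<noteq> [] \<Longrightarrow> fill_sum (zeta_q_trunc m) ks = zeta_t_trunc m ks"
proof (induction "length ks" arbitrary: ks m rule: less_induct)
  case less
  then obtain k1 r where ks: "ks = k1 # r" by (cases ks) auto
  show ?case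
  proof (cases r)
    case Nil
    then show ?thesis
      by (simp add: ks fill_sum_single zeta_t_trunc_single zeta_q_trunc.simps(2) embed_fps_sum qterm_t_def)
  next
    case (Cons k2 rest)
    with less.prems ks have k: "1 \<le> k1" "1 \<le> k2" "rest \<in> positive_indices" by auto
    have IH: "fill_sum (zeta_q_trunc m') ks' = zeta_t_trunc m' ks'"
      if "ks' \<in> {k2 # rest, (k1 + k2) # rest, (k1 + k2 - 1) # rest}" for ks' m'
      using that less.hyps[of ks'] k by (auto simp: ks Cons)
    have "fill_sum (zeta_q_trunc m) ks = (\<Sum>j\<in>{1..<m}. qterm_t k1 j * zeta_t_trunc j (k2 # rest))
        + tvar_fps * (zeta_t_trunc m ((k1 + k2) # rest) + (1 - fps_X) * zeta_t_trunc m ((k1 + k2 - 1) # rest))"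
      using k by (simp add: ks Cons fill_sum_Cons_Cons IH)
    also have "\<dots> = zeta_t_trunc m ks"
      unfolding zeta_t_trunc_merge[OF k(1,2)] ks Cons zeta_t_trunc_Cons_Cons ..
    finally show ?thesis .
  qed
qed

section \<open>Passing to the limit\<close>

lemma zeta_qt_cutoff:
  assumes "ks \<in> admissible_indices" "ks \<noteq> []"
  shows "fps_cutoff m (zeta_qt ks) = fps_cutoff m (zeta_t_trunc m ks)"
proof -
  have "fps_cutoff m (fill_sum zeta_q ks) = fps_cutoff m (fill_sum (zeta_q_trunc m) ks)"
  proof (rule fill_sum_cutoff_cong)
    fix bs assume "bs \<in> fillings (length ks - 1)"
    with assms have "length bs + 1 = length ks" "ks \<in> positive_indices"
      by (auto simp: fillings_eq admissible_indices_def)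
    then obtain k p where "fill ks bs = k # p" "hd ks \<le> k"
      using fill_Cons_hd by blast
    moreover have "2 \<le> hd ks" using assms by (simp add: admissible_indices_def)
    ultimately show "fps_cutoff m (zeta_q (fill ks bs)) = fps_cutoff m (zeta_q_trunc m (fill ks bs))"
      by (simp add: zeta_q_cutoff)
  qed
  with assms show ?thesis
    by (simp add: zeta_qt_eq_fill_sum fill_sum_eq_zeta_t_trunc admissible_indices_def)
qed

lemma Zqt_cutoff:
  assumes "Poly_Mapping.keys X \<subseteq> admissible_indices"
  shows "fps_cutoff m (Zqt X) = fps_cutoff m (linear_eval (zeta_t_trunc m) X)"
  unfolding Zqt_eq_linear_eval
proof (rule linear_eval_cutoff_cong)
  fix u assume "u \<in> Poly_Mapping.keys X"
  with assms show "fps_cutoff m (Zhat_word u) = fps_cutoff m (zeta_t_trunc m u)"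
    by (cases "u = []") (auto simp: Zhat_word_def zeta_qt_cutoff)
qed

theorem proposition2p5:
  assumes "v \<in> H0" and "w \<in> H0"
  shows "Zqt (tprod v w) = Zqt v * Zqt w"
proof (rule fps_eq_if_cutoff_eq)
  fix m
  have v: "Poly_Mapping.keys v \<subseteq> admissible_indices" and w: "Poly_Mapping.keys w \<subseteq> admissible_indices"
    using assms by (simp_all add: H0_keys_admissible)
  have "fps_cutoff m (Zqt (tprod v w)) = fps_cutoff m (linear_eval (zeta_t_trunc m) (tprod v w))"
    by (rule Zqt_cutoff[OF keys_tprod_admissible[OF v w]])
  also have "\<dots> = fps_cutoff m (linear_eval (zeta_t_trunc m) v * linear_eval (zeta_t_trunc m) w)"
    using v w admissible_subset_positive by (simp add: linear_eval_trunc_tprod)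
  also have "\<dots> = fps_cutoff m (Zqt v * Zqt w)"
    by (intro fps_cutoff_mult_cong) (simp_all add: Zqt_cutoff v w)
  finally show "fps_cutoff m (Zqt (tprod v w)) = fps_cutoff m (Zqt v * Zqt w)" .
qed

end
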